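(* Let $n\ge 3$, $s,t\in\{-1,1\}^{n}$ with $s\neq t$ and $\sharp_{n}(s)=\sharp_{n}(t)$, and let $(\beta_{1},\beta_{2})\in(0,1)^2$ with $\beta_{1}+\beta_{2}>1$ satisfy \[ \sum_{k=1}^{n}\Big(s_{k}\beta_{1}^{\sharp_{k}(s)}\beta_{2}^{\tilde\sharp_{k}(s)}-t_{k}\beta_{1}^{\sharp_{k}(t)}\beta_{2}^{\tilde\sharp_{k}(t)}\Big)=0 .\] Then there is a $p\in(0,1)$ such that $\widehat{SD}^{p}_{\beta_{1},\beta_{2}}<1$ and $SD^{p}_{\beta_{1},\beta_{2}}>1$.
   Context: $SD^{p}_{\beta_{1},\beta_{2}}=\frac{-p\log p-(1-p)\log(1-p)}{-p\log\beta_{1}-(1-p)\log\beta_{2}}$. For $r\in\{-1,1\}^{n}$ and $1\le k\le n$, $\sharp_{k}(r)$ is the number of entries of $(r_1,\dots,r_k)$ equal to $1$ and $\tilde\sharp_{k}(r)=k-\sharp_{k}(r)$. Put $w_r=p^{\sharp_{n}(r)}(1-p)^{\tilde\sharp_{n}(r)}$, $p_{s,t}=w_s+w_t$, $\rho_r=\beta_{1}^{\sharp_{n}(r)}\beta_{2}^{\tilde\sharp_{n}(r)}$, and \[ \widehat{SD}^{p}_{\beta_{1},\beta_{2}}=\frac{-\sum_{r\in\{-1,1\}^{n}\setminus\{s,t\}}w_r\log w_r-p_{s,t}\log p_{s,t}}{-\sum_{r\in\{-1,1\}^{n}\setminus\{s,t\}}w_r\log \rho_r-p_{s,t}\log\rho_s}.\]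 *)

theory Defs
  imports "HOL-Analysis.Analysis" "HOL-Library.FuncSet"
begin

definition cube :: "nat \<Rightarrow> (nat \<Rightarrow> int) set" where
  "cube n = PiE {1..n} (\<lambda>_. {-1, 1})"

definition cnt :: "nat \<Rightarrow> (nat \<Rightarrow> int) \<Rightarrow> nat" where
  "cnt k r = card {i \<in> {1..k}. r i = 1}"

definition cnt' :: "nat \<Rightarrow> (nat \<Rightarrow> int) \<Rightarrow> nat" where
  "cnt' k r = k - cnt k r"

definition SD :: "real \<Rightarrow> real \<Rightarrow> real \<Rightarrow> real" where
  "SD p b1 b2 = (- p * ln p - (1 - p) * ln (1 - p)) / (- p * ln b1 - (1 - p) * ln b2)"

definition wgt :: "nat \<Rightarrow> real \<Rightarrow> (nat \<Rightarrow> int) \<Rightarrow> real" where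
  "wgt n p r = p ^ cnt n r * (1 - p) ^ cnt' n r"

definition rho :: "nat \<Rightarrow> real \<Rightarrow> real \<Rightarrow> (nat \<Rightarrow> int) \<Rightarrow> real" where
  "rho n b1 b2 r = b1 ^ cnt n r * b2 ^ cnt' n r"

definition SDhat :: "nat \<Rightarrow> (nat \<Rightarrow> int) \<Rightarrow> (nat \<Rightarrow> int) \<Rightarrow> real \<Rightarrow> real \<Rightarrow> real \<Rightarrow> real" where
  "SDhat n s t p b1 b2 =
    (let pst = wgt n p s + wgt n p t in
     (- (\<Sum>r\<in>cube n - {s, t}. wgt n p r * ln (wgt n p r)) - pst * ln pst) /
     (- (\<Sum>r\<in>cube n - {s, t}. wgt n p r * ln (rho n b1 b2 r)) - pst * ln (rho n b1 b2 s)))"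

end

theory Submission
  imports Defs "HOL-Real_Asymp.Real_Asymp"
begin

(* Write H = bin_entropy and D = cross_entropy.  Summed over the cube with the product weights
   w_r, the entropy and the cross entropy are n H p and n D p, and merging the two equally
   weighted words s, t lowers the numerator of SDhat by exactly 2 w_s ln 2.  So it suffices to
   find p with 0 < n (H p - D p) < 2 w_s ln 2.  At p = b1/(b1+b2) one has H - D = ln (b1+b2) > 0,
   while H - D < 0 near 0, since H vanishes there and D is bounded below; the intermediate
   value theorem then yields p with H - D positive and as small as wanted, and w_s stays bounded
   away from 0 on the interval in between. *)

definition bin_entropy :: "real \<Rightarrow> real" where
  "bin_entropy p = - p * ln p - (1 - p) * ln (1 - p)"

definition cross_entropy :: "real \<Rightarrow> real \<Rightarrow> real \<Rightarrow> real" where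
  "cross_entropy p b1 b2 = - p * ln b1 - (1 - p) * ln b2"

lemma SD_eq: "SD p b1 b2 = bin_entropy p / cross_entropy p b1 b2"
  by (simp add: SD_def bin_entropy_def cross_entropy_def)

lemma bin_entropy_tendsto_0: "(bin_entropy \<longlongrightarrow> 0) (at_right 0)"
  unfolding bin_entropy_def by real_asymp

lemma continuous_on_entropy_gap:
  assumes "0 < a" "b < 1"
  shows "continuous_on {a..b} (\<lambda>p. bin_entropy p - cross_entropy p b1 b2)"
  unfolding bin_entropy_def cross_entropy_def using assms
  by (auto intro!: continuous_intros)

lemma cross_entropy_ge_min:
  assumes "0 \<le> p" "p \<le> 1"
  shows "min (- ln b1) (- ln b2) \<le> cross_entropy p b1 b2"
proof -
  have "p * min (- ln b1) (- ln b2) + (1 - p) * min (- ln b1) (- ln b2)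
        \<le> p * (- ln b1) + (1 - p) * (- ln b2)"
    using assms by (intro add_mono mult_left_mono) auto
  then show ?thesis by (simp add: cross_entropy_def algebra_simps)
qed

lemma cross_entropy_pos:
  assumes "0 < b1" "b1 < 1" "0 < b2" "b2 < 1" "0 \<le> p" "p \<le> 1"
  shows "0 < cross_entropy p b1 b2"
proof -
  have "0 < min (- ln b1) (- ln b2)" using assms(1-4) by simp
  then show ?thesis using cross_entropy_ge_min[OF assms(5,6), of b1 b2] by linarith
qed

lemma entropy_gap_at_tilt:
  assumes "0 < b1" "0 < b2"
  shows "bin_entropy (b1 / (b1 + b2)) - cross_entropy (b1 / (b1 + b2)) b1 b2 = ln (b1 + b2)"
proof -
  define q where "q = b1 / (b1 + b2)"
  have "1 - q = b2 / (b1 + b2)" using assms by (simp add: q_def field_simps)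
  then have "ln b1 = ln q + ln (b1 + b2)" "ln b2 = ln (1 - q) + ln (b1 + b2)"
    using assms by (simp_all add: q_def ln_div)
  then show ?thesis
    unfolding q_def[symmetric] bin_entropy_def cross_entropy_def by (simp add: algebra_simps)
qed

lemma entropy_gap_negative_near_0:
  assumes "0 < b1" "b1 < 1" "0 < b2" "b2 < 1" "0 < q"
  obtains e where "0 < e" "e < q" "bin_entropy e < cross_entropy e b1 b2"
proof -
  define m where "m = min (- ln b1) (- ln b2)"
  have "m > 0" using assms by (simp add: m_def)
  then have "eventually (\<lambda>p. bin_entropy p < m) (at_right 0)"
    using order_tendstoD(2)[OF bin_entropy_tendsto_0] by blast
  then obtain d where "d > 0" and d: "\<And>p. 0 < p \<Longrightarrow> p < d \<Longrightarrow> bin_entropy p < m"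
    unfolding eventually_at_right_field by auto
  define e where "e = min d (min q 1) / 2"
  have e: "0 < e" "e < d" "e < q" "e < 1"
    using \<open>d > 0\<close> assms(5) by (auto simp: e_def)
  have "m \<le> cross_entropy e b1 b2"
    unfolding m_def using e by (intro cross_entropy_ge_min) auto
  with d[OF e(1,2)] show ?thesis using that e(1,3) by force
qed

lemma one_less_SD_iff:
  assumes "0 < cross_entropy p b1 b2"
  shows "1 < SD p b1 b2 \<longleftrightarrow> cross_entropy p b1 b2 < bin_entropy p"
  using assms by (simp add: SD_eq)

lemma finite_cube: "finite (cube n)"
  unfolding cube_def by (rule finite_PiE) auto

lemma cnt_le: "cnt n r \<le> n"
  unfolding cnt_def by (rule order_trans[OF card_mono[of "{1..n}"]]) auto

lemma cnt_eq_sum: "real (cnt n r) = (\<Sum>i\<in>{1..n}. of_bool (r i = 1))"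
proof -
  have "real (cnt n r) = (\<Sum>i\<in>{i \<in> {1..n}. r i = 1}. 1)" unfolding cnt_def by simp
  also have "\<dots> = (\<Sum>i\<in>{1..n}. if r i = 1 then 1 else 0)" by (rule sum.inter_filter) simp
  finally show ?thesis by (simp only: of_bool_def)
qed

lemma wgt_eq_prod: "wgt n p r = (\<Prod>i\<in>{1..n}. if r i = 1 then p else 1 - p)"
proof -
  have "{1..n} \<inter> {i. r i = 1} = {i \<in> {1..n}. r i = 1}"
    and "{1..n} \<inter> - {i. r i = 1} = {1..n} - {i \<in> {1..n}. r i = 1}" by auto
  moreover have "card ({1..n} - {i \<in> {1..n}. r i = 1}) = cnt' n r"
    unfolding cnt'_def cnt_def by (subst card_Diff_subset) auto
  ultimately show ?thesis by (simp add: prod.If_cases wgt_def cnt_def)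
qed

lemma sum_cube_prod:
  fixes f :: "nat \<Rightarrow> int \<Rightarrow> 'a :: comm_semiring_1"
  shows "(\<Sum>r\<in>cube n. \<Prod>i\<in>{1..n}. f i (r i)) = (\<Prod>i\<in>{1..n}. f i (-1) + f i 1)"
  unfolding cube_def by (subst prod_sum_PiE[symmetric]) auto

lemma sum_wgt: "(\<Sum>r\<in>cube n. wgt n p r) = 1"
  unfolding wgt_eq_prod by (subst sum_cube_prod) simp

lemma sum_wgt_coordinate:
  assumes "i \<in> {1..n}"
  shows "(\<Sum>r\<in>cube n. wgt n p r * of_bool (r i = 1)) = p"
proof -
  define f where "f j x = (if x = 1 then p else if j = i then 0 else 1 - p)" for j and x :: int
  have factor: "wgt n p r * of_bool (r i = 1) = (\<Prod>j\<in>{1..n}. f j (r j))" for r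
  proof -
    have "(\<Prod>j\<in>{1..n} - {i}. f j (r j)) = (\<Prod>j\<in>{1..n} - {i}. if r j = 1 then p else 1 - p)"
      by (rule prod.cong) (auto simp: f_def)
    then show ?thesis using assms by (simp add: wgt_eq_prod prod.remove f_def)
  qed
  have "(\<Sum>r\<in>cube n. wgt n p r * of_bool (r i = 1)) = (\<Sum>r\<in>cube n. \<Prod>j\<in>{1..n}. f j (r j))"
    by (simp only: factor)
  also have "\<dots> = (\<Prod>j\<in>{1..n}. f j (-1) + f j 1)"
    by (rule sum_cube_prod)
  also have "\<dots> = (\<Prod>j\<in>{1..n}. if j = i then p else 1)"
    by (rule prod.cong) (auto simp: f_def)
  finally show ?thesis using assms by (simp add: prod.delta)
qed

lemma sum_wgt_cnt: "(\<Sum>r\<in>cube n. wgt n p r * cnt n r) = n * p"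
proof -
  have "(\<Sum>r\<in>cube n. wgt n p r * cnt n r)
        = (\<Sum>i\<in>{1..n}. \<Sum>r\<in>cube n. wgt n p r * of_bool (r i = 1))"
    unfolding cnt_eq_sum sum_distrib_left by (rule sum.swap)
  then show ?thesis by (simp add: sum_wgt_coordinate)
qed

lemma sum_wgt_cnt': "(\<Sum>r\<in>cube n. wgt n p r * cnt' n r) = n * (1 - p)"
proof -
  have "(\<Sum>r\<in>cube n. wgt n p r * cnt' n r) = (\<Sum>r\<in>cube n. wgt n p r * n - wgt n p r * cnt n r)"
    by (rule sum.cong) (auto simp: cnt'_def of_nat_diff cnt_le algebra_simps)
  also have "\<dots> = (\<Sum>r\<in>cube n. wgt n p r) * n - (\<Sum>r\<in>cube n. wgt n p r * cnt n r)"
    by (simp add: sum_subtractf sum_distrib_right)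
  finally show ?thesis by (simp add: sum_wgt sum_wgt_cnt algebra_simps)
qed

lemma sum_wgt_ln_pow:
  assumes "0 < x" "0 < y"
  shows "- (\<Sum>r\<in>cube n. wgt n p r * ln (x ^ cnt n r * y ^ cnt' n r)) = n * (- p * ln x - (1 - p) * ln y)"
proof -
  have "(\<Sum>r\<in>cube n. wgt n p r * ln (x ^ cnt n r * y ^ cnt' n r))
        = (\<Sum>r\<in>cube n. wgt n p r * cnt n r * ln x + wgt n p r * cnt' n r * ln y)"
    using assms by (intro sum.cong) (auto simp: ln_mult ln_realpow algebra_simps)
  also have "\<dots> = (\<Sum>r\<in>cube n. wgt n p r * cnt n r) * ln x + (\<Sum>r\<in>cube n. wgt n p r * cnt' n r) * ln y"
    by (simp add: sum.distrib sum_distrib_right)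
  finally show ?thesis by (simp add: sum_wgt_cnt sum_wgt_cnt' algebra_simps)
qed

lemma sum_wgt_ln_wgt:
  assumes "0 < p" "p < 1"
  shows "- (\<Sum>r\<in>cube n. wgt n p r * ln (wgt n p r)) = n * bin_entropy p"
  using sum_wgt_ln_pow[of p "1 - p" n] assms by (simp add: wgt_def bin_entropy_def)

lemma sum_wgt_ln_rho:
  assumes "0 < b1" "0 < b2"
  shows "- (\<Sum>r\<in>cube n. wgt n p r * ln (rho n b1 b2 r)) = n * cross_entropy p b1 b2"
  using sum_wgt_ln_pow[OF assms, of n p] by (simp add: rho_def cross_entropy_def)

lemma SDhat_eq:
  assumes "0 < p" "p < 1" "0 < b1" "0 < b2"
    and "s \<in> cube n" "t \<in> cube n" "s \<noteq> t" "cnt n s = cnt n t"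
  shows "SDhat n s t p b1 b2
           = (n * bin_entropy p - 2 * wgt n p s * ln 2) / (n * cross_entropy p b1 b2)"
proof -
  have "cnt' n t = cnt' n s" using assms(8) by (simp add: cnt'_def)
  then have w: "wgt n p t = wgt n p s" and rho: "rho n b1 b2 t = rho n b1 b2 s"
    using assms(8) by (simp_all add: wgt_def rho_def)
  have remove: "(\<Sum>r\<in>cube n - {s, t}. f r) = (\<Sum>r\<in>cube n. f r) - f s - f t"
    for f :: "(nat \<Rightarrow> int) \<Rightarrow> real"
    using assms(5-7) by (subst sum_diff) (auto simp: finite_cube)
  have "0 < wgt n p s" using assms(1,2) by (simp add: wgt_def)
  then have "ln (wgt n p s + wgt n p s) = ln 2 + ln (wgt n p s)"
    by (simp add: ln_mult flip: mult_2)
  then show ?thesis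
    using sum_wgt_ln_wgt[OF assms(1,2), of n] sum_wgt_ln_rho[OF assms(3,4), of n p]
    unfolding SDhat_def Let_def remove w rho by (simp add: algebra_simps)
qed

lemma SDhat_less_one_iff:
  assumes "0 < n" "0 < p" "p < 1" "0 < b1" "b1 < 1" "0 < b2" "b2 < 1"
    and "s \<in> cube n" "t \<in> cube n" "s \<noteq> t" "cnt n s = cnt n t"
  shows "SDhat n s t p b1 b2 < 1
           \<longleftrightarrow> n * (bin_entropy p - cross_entropy p b1 b2) < 2 * wgt n p s * ln 2"
proof -
  have "0 < n * cross_entropy p b1 b2"
    using assms(1-7) by (simp add: cross_entropy_pos)
  then show ?thesis
    using assms by (simp add: SDhat_eq divide_less_eq algebra_simps)
qed

theorem proposition2p2:
  fixes n :: nat and s t :: "nat \<Rightarrow> int" and b1 b2 :: real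
  assumes "n \<ge> 3"
    and "s \<in> cube n" and "t \<in> cube n" and "s \<noteq> t"
    and "cnt n s = cnt n t"
    and "0 < b1" and "b1 < 1" and "0 < b2" and "b2 < 1" and "b1 + b2 > 1"
    and "(\<Sum>k=1..n. of_int (s k) * b1 ^ cnt k s * b2 ^ cnt' k s
                    - of_int (t k) * b1 ^ cnt k t * b2 ^ cnt' k t) = 0"
  shows "\<exists>p::real. 0 < p \<and> p < 1 \<and> SDhat n s t p b1 b2 < 1 \<and> SD p b1 b2 > 1"
proof -
  define q where "q = b1 / (b1 + b2)"
  have q: "0 < q" "q < 1" using assms(6,8) by (auto simp: q_def field_simps)
  obtain e where e: "0 < e" "e < q" and gap_e: "bin_entropy e < cross_entropy e b1 b2"
    using entropy_gap_negative_near_0[OF assms(6-9) q(1)] .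
  define w where "w = e ^ cnt n s * (1 - q) ^ cnt' n s"
  have "0 < w" using e q by (simp add: w_def)
  have w_le: "w \<le> wgt n p s" if "e \<le> p" "p \<le> q" for p
    unfolding wgt_def w_def using that e q by (intro mult_mono power_mono) auto
  define h where "h = 2 * w * ln 2 / n"
  define c where "c = min (ln (b1 + b2)) h / 2"
  have "0 < ln (b1 + b2)" "0 < h" using \<open>0 < w\<close> assms(1,10) by (auto simp: h_def)
  then have c: "0 < c" "c < ln (b1 + b2)" "c < h"
    unfolding c_def min_def by auto
  have "\<exists>p\<ge>e. p \<le> q \<and> bin_entropy p - cross_entropy p b1 b2 = c"
    using gap_e c(1,2) e(2) entropy_gap_at_tilt[OF assms(6,8)] unfolding q_def[symmetric]
    by (intro IVT'[OF _ _ _ continuous_on_entropy_gap[OF e(1) q(2)]]) auto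
  then obtain p where p: "e \<le> p" "p \<le> q" and gap_p: "bin_entropy p - cross_entropy p b1 b2 = c"
    by blast
  have "0 < p" "p < 1" using p e q by auto
  have "n * c < 2 * w * ln 2" using c(3) assms(1) by (simp add: h_def field_simps)
  also have "\<dots> \<le> 2 * wgt n p s * ln 2" using w_le[OF p] by simp
  finally have "SDhat n s t p b1 b2 < 1"
    using gap_p SDhat_less_one_iff[of n p b1 b2 s t] assms(1-9) \<open>0 < p\<close> \<open>p < 1\<close> by simp
  moreover have "1 < SD p b1 b2"
    using gap_p c(1) \<open>0 < p\<close> \<open>p < 1\<close> assms(6-9) by (simp add: one_less_SD_iff cross_entropy_pos)
  ultimately show ?thesis using \<open>0 < p\<close> \<open>p < 1\<close> by blast
qed

end
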